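(* For $\lambda>0$ let $N_\lambda$ be a Poisson random variable with parameter $\lambda$. Then $$\inf_{\lambda>0}P\left\{|N_\lambda-E[N_\lambda]|\le\sqrt{\mathrm{Var}(N_\lambda)}\right\}=1.5e^{-1}.$$ *)

theory Defs
  imports "HOL-Probability.Probability"
begin

end

theory Submission
  imports Defs
begin

text \<open>
  The mean and the variance of \<open>poisson_pmf l\<close> are both \<open>l\<close>, so the probability in question is
  the mass \<open>F l\<close> of the window \<open>\<bar>k - l\<bar> \<le> sqrt l\<close>. For \<open>1 < l < 3/2\<close> this window is
  \<open>{1, 2}\<close>, hence \<open>F l = (l + l\<^sup>2 / 2) exp (- l) \<rightarrow> 3 / (2 e)\<close> as \<open>l \<rightarrow> 1+\<close>, and the
  infimum is at most \<open>3 / (2 e)\<close>.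

  For the lower bound: when \<open>l \<le> 1\<close> the window contains \<open>0\<close>, and also \<open>1\<close> once \<open>l \<ge> 1/2\<close>.
  On \<open>[1, 36]\<close> the mass of a fixed block \<open>{a..b}\<close> is a quasi-concave function of the rate (its
  derivative \<open>p(a - 1) - p(b)\<close> changes sign at most once, from \<open>+\<close> to \<open>-\<close>). So after cutting
  \<open>[1, 36]\<close> into cells on each of which a fixed block lies inside the window, it suffices to bound
  the block mass at the cell endpoints, which is done with exact rational certificates. For
  \<open>l \<ge> 36\<close>, comparing consecutive probabilities through \<open>p(k + 1) / p(k) = l / (k + 1)\<close> bounds
  each tail outside \<open>{\<lceil>l - sqrt l\<rceil>..\<lfloor>l + sqrt l\<rfloor>}\<close> by \<open>25/31\<close> of the adjacent half of that
  block, so the block carries mass at least \<open>31/56 > 3 / (2 e)\<close>.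
\<close>

section \<open>Poisson probabilities and their moments\<close>

definition poisson_prob :: "real \<Rightarrow> nat \<Rightarrow> real" where
  "poisson_prob l k = l ^ k / fact k * exp (- l)"

lemma poisson_prob_nonneg: "0 \<le> l \<Longrightarrow> 0 \<le> poisson_prob l k"
  by (simp add: poisson_prob_def)

lemma poisson_prob_pos: "0 < l \<Longrightarrow> 0 < poisson_prob l k"
  by (simp add: poisson_prob_def)

lemma poisson_prob_Suc: "poisson_prob l (Suc k) = poisson_prob l k * l / real (Suc k)"
  unfolding poisson_prob_def by (simp add: fact_Suc field_simps del: of_nat_Suc)

lemma pmf_poisson_pmf: "0 < l \<Longrightarrow> pmf (poisson_pmf l) k = poisson_prob l k"
  by (simp add: poisson_prob_def)

lemma sums_poisson_prob: "(\<lambda>k. poisson_prob l k) sums 1"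
proof -
  have "(\<lambda>k. l ^ k / fact k) sums exp l"
    using exp_converges[of l] by (simp add: divide_inverse mult.commute)
  then have "(\<lambda>k. l ^ k / fact k * exp (- l)) sums (exp l * exp (- l))"
    by (rule sums_mult2)
  then show ?thesis by (simp add: poisson_prob_def exp_minus)
qed

lemma sums_poisson_first_moment: "(\<lambda>k. real k * poisson_prob l k) sums l"
proof -
  have "(\<lambda>k. l * poisson_prob l k) sums (l * 1)"
    by (intro sums_mult sums_poisson_prob)
  then have "(\<lambda>k. real (Suc k) * poisson_prob l (Suc k)) sums l"
    by (simp add: poisson_prob_Suc mult.commute del: of_nat_Suc)
  then show ?thesis
    by (subst (asm) sums_Suc_iff) simp
qed

lemma sums_poisson_second_moment: "(\<lambda>k. (real k)\<^sup>2 * poisson_prob l k) sums (l * (l + 1))"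
proof -
  have "(\<lambda>k. (real (Suc k))\<^sup>2 * poisson_prob l (Suc k))
      = (\<lambda>k. l * (real k * poisson_prob l k + poisson_prob l k))"
    by (simp add: power2_eq_square fun_eq_iff mult.assoc poisson_prob_Suc del: of_nat_Suc)
       (simp add: algebra_simps)
  moreover have "(\<lambda>k. l * (real k * poisson_prob l k + poisson_prob l k)) sums (l * (l + 1))"
    by (intro sums_mult sums_add sums_poisson_first_moment sums_poisson_prob)
  ultimately have "(\<lambda>k. (real (Suc k))\<^sup>2 * poisson_prob l (Suc k)) sums (l * (l + 1))"
    by simp
  then show ?thesis
    by (subst (asm) sums_Suc_iff) simp
qed

lemma expectation_pmf_nat_sums:
  fixes p :: "nat pmf" and f :: "nat \<Rightarrow> real"
  assumes "(\<lambda>n. pmf p n * f n) sums S" and "\<And>n. 0 \<le> f n"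
  shows "measure_pmf.expectation p f = S"
proof -
  have "integrable (count_space UNIV) (\<lambda>n. pmf p n * f n)"
    using assms unfolding integrable_count_space_nat_iff by (simp add: sums_iff)
  then have "(\<integral>n. pmf p n * f n \<partial>count_space UNIV) = S"
    using assms(1) by (simp add: integral_count_space_nat sums_iff)
  then show ?thesis
    unfolding measure_pmf_eq_density by (subst integral_density) auto
qed

lemma poisson_pmf_expectation:
  assumes "0 < l"
  shows "measure_pmf.expectation (poisson_pmf l) real = l"
  using assms sums_poisson_first_moment[of l]
  by (intro expectation_pmf_nat_sums) (simp_all del: pmf_poisson add: pmf_poisson_pmf mult.commute)

lemma poisson_pmf_variance:
  assumes "0 < l"
  shows "measure_pmf.variance (poisson_pmf l) real = l"
proof -
  have "(\<lambda>k. (real k)\<^sup>2 * poisson_prob l k - 2 * l * (real k * poisson_prob l k) + l\<^sup>2 * poisson_prob l k)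
      sums (l * (l + 1) - 2 * l * l + l\<^sup>2 * 1)"
    by (intro sums_add sums_diff sums_mult sums_poisson_second_moment
        sums_poisson_first_moment sums_poisson_prob)
  then have "(\<lambda>k. pmf (poisson_pmf l) k * (real k - l)\<^sup>2) sums l"
    using assms by (simp del: pmf_poisson add: pmf_poisson_pmf power2_eq_square algebra_simps)
  then have "measure_pmf.expectation (poisson_pmf l) (\<lambda>k. (real k - l)\<^sup>2) = l"
    by (rule expectation_pmf_nat_sums) simp
  then show ?thesis
    by (simp add: poisson_pmf_expectation[OF assms])
qed

definition poisson_sd_prob :: "real \<Rightarrow> real" where
  "poisson_sd_prob l = (\<Sum>k | \<bar>real k - l\<bar> \<le> sqrt l. poisson_prob l k)"

lemma finite_sd_window: "finite {k::nat. \<bar>real k - l\<bar> \<le> sqrt l}"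
proof (rule finite_subset)
  show "{k::nat. \<bar>real k - l\<bar> \<le> sqrt l} \<subseteq> {..nat \<lceil>l + sqrt l\<rceil>}"
  proof
    fix k assume "k \<in> {k::nat. \<bar>real k - l\<bar> \<le> sqrt l}"
    then have "real k \<le> l + sqrt l"
      by (simp add: abs_le_iff)
    then have "real k \<le> real (nat \<lceil>l + sqrt l\<rceil>)"
      using real_nat_ceiling_ge[of "l + sqrt l"] by linarith
    then show "k \<in> {..nat \<lceil>l + sqrt l\<rceil>}"
      by (simp only: of_nat_le_iff atMost_iff)
  qed
qed simp

lemma poisson_pmf_prob_within_sd:
  assumes "0 < l"
  shows "measure_pmf.prob (poisson_pmf l)
           {k. \<bar>real k - measure_pmf.expectation (poisson_pmf l) real\<bar>
                 \<le> sqrt (measure_pmf.variance (poisson_pmf l) real)}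
         = poisson_sd_prob l"
  using assms finite_sd_window[of l]
  unfolding poisson_pmf_variance[OF assms] unfolding poisson_pmf_expectation[OF assms]
  by (simp del: pmf_poisson add: measure_measure_pmf_finite pmf_poisson_pmf poisson_sd_prob_def)

section \<open>Block probabilities are quasi-concave in the rate\<close>

definition poisson_interval :: "nat \<Rightarrow> nat \<Rightarrow> real \<Rightarrow> real" where
  "poisson_interval a b l = (\<Sum>k = a..b. poisson_prob l k)"

lemma poisson_interval_le_sd_prob:
  assumes "0 < l" and "\<And>k. a \<le> k \<Longrightarrow> k \<le> b \<Longrightarrow> \<bar>real k - l\<bar> \<le> sqrt l"
  shows "poisson_interval a b l \<le> poisson_sd_prob l"
  unfolding poisson_interval_def poisson_sd_prob_def
  using assms by (intro sum_mono2 finite_sd_window) (auto intro: poisson_prob_nonneg)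

lemma poisson_prob_has_derivative:
  "((\<lambda>t. poisson_prob t k) has_real_derivative
     (if k = 0 then 0 else poisson_prob t (k - 1)) - poisson_prob t k) (at t)"
proof (cases k)
  case 0
  then show ?thesis
    unfolding poisson_prob_def by (auto intro!: derivative_eq_intros)
next
  case (Suc j)
  have "((\<lambda>t. t ^ Suc j / fact (Suc j) * exp (- t)) has_real_derivative
          t ^ j / fact j * exp (- t) - t ^ Suc j / fact (Suc j) * exp (- t)) (at t)"
    by (rule derivative_eq_intros refl | simp)+
  then show ?thesis
    using Suc by (simp add: poisson_prob_def)
qed

lemma poisson_interval_has_derivative:
  assumes "a \<le> b"
  shows "(poisson_interval a b has_real_derivative
           (if a = 0 then 0 else poisson_prob t (a - 1)) - poisson_prob t b) (at t)"
  using assms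
proof (induction b rule: dec_induct)
  case base
  then show ?case
    using poisson_prob_has_derivative[of a t] by (simp add: poisson_interval_def)
next
  case (step b)
  have "poisson_interval a (Suc b) = (\<lambda>t. poisson_interval a b t + poisson_prob t (Suc b))"
    using step.hyps by (auto simp: poisson_interval_def fun_eq_iff)
  with DERIV_add[OF step.IH poisson_prob_has_derivative[of "Suc b" t]] show ?case
    by simp
qed

text \<open>For \<open>j \<le> k\<close> the ratio \<open>poisson_prob t k / poisson_prob t j\<close> is a multiple of
  \<open>t ^ (k - j)\<close>, hence increasing in \<open>t\<close>.\<close>
lemma poisson_prob_le_at_smaller_rate:
  assumes "j \<le> k" "0 < t1" "t1 \<le> t2" "poisson_prob t2 k \<le> poisson_prob t2 j"
  shows "poisson_prob t1 k \<le> poisson_prob t1 j"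
proof -
  define c :: real where "c = fact j / fact k"
  have ratio: "poisson_prob t k = poisson_prob t j * (t ^ (k - j) * c)" if "0 < t" for t
    using that assms(1) unfolding poisson_prob_def c_def
    by (simp add: power_add[symmetric] field_simps)
  have c: "0 \<le> c" by (simp add: c_def)
  have "t2 ^ (k - j) * c \<le> 1"
    using assms(4) ratio[of t2] poisson_prob_pos[of t2 j] assms(2,3)
    by (simp add: mult_le_cancel_left1)
  moreover have "t1 ^ (k - j) * c \<le> t2 ^ (k - j) * c"
    using assms(2,3) c by (intro mult_right_mono power_mono) auto
  ultimately show ?thesis
    using ratio[OF assms(2)] poisson_prob_pos[OF assms(2), of j]
    by (simp add: mult_le_cancel_left1)
qed

lemma poisson_interval_quasiconcave:
  assumes "0 < x" "x \<le> t" "t \<le> y" "a \<le> b"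
  shows "min (poisson_interval a b x) (poisson_interval a b y) \<le> poisson_interval a b t"
proof -
  define D where "D s = (if a = 0 then 0 else poisson_prob s (a - 1)) - poisson_prob s b" for s
  have deriv: "(poisson_interval a b has_real_derivative D s) (at s)" for s
    unfolding D_def by (rule poisson_interval_has_derivative[OF assms(4)])
  have D_nonneg_below: "0 \<le> D s" if "0 < s" "s \<le> s'" "0 \<le> D s'" for s s'
    using that assms(4) poisson_prob_pos[of s' b] poisson_prob_le_at_smaller_rate[of "a - 1" b s s']
    by (auto simp: D_def split: if_splits)
  show ?thesis
  proof (cases "0 \<le> D t")
    case True
    have "poisson_interval a b x \<le> poisson_interval a b t"
    proof (rule deriv_nonneg_imp_mono[OF deriv])
      show "0 \<le> D s" if "s \<in> {x..t}" for s
        using that assms D_nonneg_below[OF _ _ True] by simp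
    qed (use assms in simp)
    then show ?thesis by simp
  next
    case False
    have "poisson_interval a b y \<le> poisson_interval a b t"
    proof (rule DERIV_nonpos_imp_nonincreasing[OF \<open>t \<le> y\<close>])
      fix s assume "t \<le> s"
      then have "\<not> 0 \<le> D s"
        using D_nonneg_below[of t s] False assms by auto
      with deriv show "\<exists>D'. (poisson_interval a b has_real_derivative D') (at s) \<and> D' \<le> 0"
        by force
    qed
    then show ?thesis by simp
  qed
qed

lemma diff_sqrt_mono:
  assumes "1/4 \<le> l" "l \<le> y"
  shows "l - sqrt l \<le> y - sqrt y"
proof -
  have "1/2 \<le> sqrt l" "1/2 \<le> sqrt y" "sqrt l \<le> sqrt y"
    using assms real_le_rsqrt[of "1/2" l] real_le_rsqrt[of "1/2" y] by (auto simp: power2_eq_square)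
  then have "(sqrt y - sqrt l) * 1 \<le> (sqrt y - sqrt l) * (sqrt y + sqrt l)"
    by (intro mult_left_mono) linarith+
  also have "\<dots> = y - l"
    using assms by (simp add: algebra_simps)
  finally show ?thesis
    by simp
qed

lemma poisson_sd_prob_ge_on_interval:
  assumes "1/4 \<le> x" "x \<le> l" "l \<le> y" "a \<le> b"
    and "real b - x \<le> sqrt x" "y - real a \<le> sqrt y"
    and "c \<le> poisson_interval a b x" "c \<le> poisson_interval a b y"
  shows "c \<le> poisson_sd_prob l"
proof -
  have "sqrt x \<le> sqrt l" "l - sqrt l \<le> y - sqrt y"
    using assms diff_sqrt_mono[of l y] by simp_all
  then have "\<bar>real k - l\<bar> \<le> sqrt l" if "a \<le> k" "k \<le> b" for k
  proof -
    have "real a \<le> real k" "real k \<le> real b"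
      using that by simp_all
    with assms \<open>sqrt x \<le> sqrt l\<close> \<open>l - sqrt l \<le> y - sqrt y\<close> show ?thesis
      unfolding abs_le_iff by (intro conjI; linarith)
  qed
  then have "poisson_interval a b l \<le> poisson_sd_prob l"
    using assms by (intro poisson_interval_le_sd_prob) auto
  moreover have "min (poisson_interval a b x) (poisson_interval a b y) \<le> poisson_interval a b l"
    using assms by (intro poisson_interval_quasiconcave) auto
  ultimately show ?thesis
    using assms by linarith
qed

section \<open>Rates up to 1\<close>

lemma poisson_sd_prob_ge_small:
  assumes "0 < l" "l \<le> 1"
  shows "3/2 * exp (-1) \<le> poisson_sd_prob l"
proof -
  have sqrt: "l \<le> sqrt l"
    using assms by (simp add: real_le_rsqrt power2_eq_square mult_le_cancel_left1)
  show ?thesis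
  proof (cases "l \<le> 1/2")
    case True
    have "3/2 * exp (-1) \<le> exp (1/2) * exp (-1::real)"
      using exp_ge_add_one_self[of "1/2::real"] by simp
    also have "\<dots> \<le> exp (- l)"
      using True by (simp flip: exp_add)
    also have "\<dots> = poisson_interval 0 0 l"
      by (simp add: poisson_interval_def poisson_prob_def)
    also have "\<dots> \<le> poisson_sd_prob l"
      using assms sqrt by (intro poisson_interval_le_sd_prob) auto
    finally show ?thesis .
  next
    case False
    have "1 - l \<le> sqrt l"
      using False real_le_rsqrt[of "1/2" l] by (simp add: power2_eq_square)
    have "3/2 * exp (-1) \<le> (1 + l) * exp (- l)"
      using False assms by (intro mult_mono) auto
    also have "\<dots> = poisson_interval 0 1 l"
      by (simp add: poisson_interval_def poisson_prob_def algebra_simps)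
    also have "\<dots> \<le> poisson_sd_prob l"
      using assms sqrt \<open>1 - l \<le> sqrt l\<close>
      by (intro poisson_interval_le_sd_prob) (auto simp: le_Suc_eq)
    finally show ?thesis .
  qed
qed

section \<open>Rates between 1 and 36: certified numerics\<close>

fun taylor_lower_chain :: "real \<Rightarrow> nat \<Rightarrow> real list \<Rightarrow> bool" where
  "taylor_lower_chain x k (c # d # cs) \<longleftrightarrow>
     d \<le> c * x / real (Suc k) \<and> taylor_lower_chain x (Suc k) (d # cs)"
| "taylor_lower_chain x k _ \<longleftrightarrow> True"

lemma taylor_lower_chain_le:
  assumes "taylor_lower_chain x k cs" "0 \<le> x" "cs \<noteq> []" "hd cs \<le> x ^ k / fact k" "i < length cs"
  shows "cs ! i \<le> x ^ (k + i) / fact (k + i)"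
  using assms
proof (induction x k cs arbitrary: i rule: taylor_lower_chain.induct)
  case (1 x k c d cs)
  show ?case
  proof (cases i)
    case 0
    then show ?thesis using "1.prems" by simp
  next
    case (Suc i')
    have "d \<le> c * x / real (Suc k)"
      using "1.prems" by simp
    also have "\<dots> \<le> x ^ k / fact k * x / real (Suc k)"
      using "1.prems" by (intro divide_right_mono mult_right_mono) auto
    also have "\<dots> = x ^ Suc k / fact (Suc k)"
      by (simp add: fact_Suc field_simps del: of_nat_Suc)
    finally have "(d # cs) ! i' \<le> x ^ (Suc k + i') / fact (Suc k + i')"
      using "1.prems" Suc by (intro "1.IH") auto
    then show ?thesis
      using Suc by simp
  qed
qed auto

lemma sum_list_take_drop:
  assumes "a \<le> b" "b < length cs"
  shows "sum_list (take (Suc b - a) (drop a cs)) = (\<Sum>k = a..b. cs ! k)"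
proof -
  have "sum_list (take (Suc b - a) (drop a cs)) = (\<Sum>i = 0..<Suc b - a. cs ! (a + i))"
    using assms by (simp add: sum_list_sum_nth min_absorb2)
  also have "\<dots> = (\<Sum>k = a..b. cs ! k)"
    using assms(1) by (subst sum.atLeastAtMost_shift_0)
      (auto simp: atLeastLessThanSuc_atLeastAtMost Suc_diff_le)
  finally show ?thesis .
qed

fun ratio_upper_chain :: "real \<Rightarrow> real list \<Rightarrow> bool" where
  "ratio_upper_chain r (c # d # cs) \<longleftrightarrow> c * r \<le> d \<and> ratio_upper_chain r (d # cs)"
| "ratio_upper_chain r _ \<longleftrightarrow> True"

lemma ratio_upper_chain_exp_le:
  assumes "ratio_upper_chain r cs" "exp z \<le> r" "0 \<le> hd cs" "i < length cs"
  shows "exp (real i * z) * hd cs \<le> cs ! i"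
  using assms
proof (induction r cs arbitrary: i rule: ratio_upper_chain.induct)
  case (1 r c d cs)
  show ?case
  proof (cases i)
    case 0
    then show ?thesis by simp
  next
    case (Suc i')
    have r: "0 \<le> r"
      using "1.prems"(2) exp_ge_zero order_trans by blast
    have c: "0 \<le> c"
      using "1.prems"(3) by simp
    have "exp z * c \<le> d"
      using "1.prems"(1) mult_right_mono[OF "1.prems"(2) c] by (simp add: mult.commute)
    moreover have "0 \<le> d"
      using "1.prems"(1) mult_nonneg_nonneg[OF c r] by simp
    ultimately have "exp (real i * z) * c \<le> exp (real i' * z) * d"
      using Suc by (simp add: distrib_right exp_add mult.assoc mult_left_mono)
    also have "\<dots> \<le> (d # cs) ! i'"
      using "1.IH"[of i'] "1.prems" Suc \<open>0 \<le> d\<close> by simp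
    finally show ?thesis
      using Suc by simp
  qed
qed auto

definition exp_int_table :: "real list" where
  "exp_int_table =
    [1, 271828183/100000000, 738905611/100000000, 20085537/1000000, 545981503/10000000,
     3710329/25000, 403428797/1000000, 109663317/100000, 149047901/50000, 405154201/50000,
     220264661/10000, 299370713/5000, 81377397/500, 2212067/5, 120260431/100, 65380349/20,
     444305537/50, 120774767/5, 65659971, 178482307, 485165212, 1318815780, 3584912980,
     9744803820, 26489123200, 72004902300, 195729618000, 532048265000, 1446257140000,
     3931334510000, 10686475200000, 29048851400000, 78962965000000, 214643593000000,
     583461779000000, 1586013560000000, 4311231850000000]"

definition exp_frac_table :: "real list" where
  "exp_frac_table =
    [1, 20317383/20000000, 103199013/100000000, 104836693/100000000, 53250181/50000000,
     3380951/3125000, 54953661/50000000, 111651457/100000000, 11342327/10000000, 144029/125000,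
     58525847/50000000, 29727301/25000000, 120796191/100000000, 122713123/100000000,
     4986419/4000000, 12663873/10000000, 64324189/50000000, 65344959/50000000,
     26552771/20000000, 8429419/6250000, 137010987/100000000, 69592617/50000000,
     28278797/20000000, 143637787/100000000, 36479299/25000000, 148232777/100000000,
     9411569/6250000, 152974761/100000000, 155402339/100000000, 157868441/100000000,
     80186839/50000000, 162918671/100000000, 165504051/100000000, 168130459/100000000,
     34159709/20000000, 43377243/25000000, 176262411/100000000, 22382443/12500000,
     90950533/50000000, 1154923/625000, 93860051/50000000, 190699059/100000000,
     19372529/10000000, 24599943/12500000, 24990323/12500000, 12693449/6250000,
     206318131/100000000, 209592223/100000000, 831712/390625, 108148551/50000000,
     13733097/6250000, 27902059/12500000, 113379363/50000000, 230357193/100000000,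
     58503191/25000000, 118863173/50000000, 241498859/100000000, 245331239/100000000,
     49844887/20000000, 253179413/100000000, 257197153/100000000, 261278651/100000000,
     265424919/100000000, 53927397/20000000]"


lemma exp_le_tables:
  assumes "i < 2368"
  shows "exp (real i / 64) \<le> exp_int_table ! (i div 64) * exp_frac_table ! (i mod 64)"
proof -
  have "exp (1::real) \<le> 2718281829 / 1000000000"
    using e_approx_32 by (simp add: abs_if split: if_split_asm)
  then have int: "exp (real (i div 64) * 1) * 1 \<le> exp_int_table ! (i div 64)"
    using assms ratio_upper_chain_exp_le[of "2718281829 / 1000000000" exp_int_table 1 "i div 64"]
    by (simp add: exp_int_table_def)
  have "exp (1/64::real) \<le> 1 + 1/64 + (1/64)\<^sup>2"
    by (rule exp_bound) auto
  then have frac: "exp (real (i mod 64) * (1/64)) * 1 \<le> exp_frac_table ! (i mod 64)"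
    using ratio_upper_chain_exp_le[of "1 + 1/64 + (1/64)\<^sup>2" exp_frac_table "1/64" "i mod 64"]
    by (simp add: exp_frac_table_def power2_eq_square)
  have "real i = real (i mod 64) + 64 * real (i div 64)"
    using mod_mult_div_eq[of i 64] by (metis of_nat_add of_nat_mult of_nat_numeral)
  then have "exp (real i / 64) = exp (real (i div 64) * 1) * exp (real (i mod 64) * (1/64))"
    by (simp add: exp_add[symmetric] field_simps)
  also have "\<dots> \<le> exp_int_table ! (i div 64) * exp_frac_table ! (i mod 64)"
    using int frac by (intro mult_mono) (auto intro: order_trans[OF exp_ge_zero])
  finally show ?thesis .
qed

text \<open>A certificate point \<open>(j, cs)\<close> stands for the rate \<open>x = j / 64\<close>: \<open>cs ! k\<close> bounds
  \<open>x ^ k / fact k\<close> from below, and \<open>exp (x - 1)\<close> is bounded from above by the two tables.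
  Working with \<open>exp (x - 1)\<close> instead of \<open>exp x\<close> keeps the check exact at \<open>x = 1\<close>, where
  the block \<open>{1, 2}\<close> has mass exactly \<open>3 / (2 e)\<close>.\<close>

definition certified_point :: "nat \<Rightarrow> real list \<Rightarrow> bool" where
  "certified_point j cs \<longleftrightarrow>
     64 \<le> j \<and> j < 2432 \<and> hd cs = 1 \<and> taylor_lower_chain (real j / 64) 0 cs"

definition certified_window :: "nat \<Rightarrow> real list \<Rightarrow> nat \<Rightarrow> nat \<Rightarrow> bool" where
  "certified_window j cs a b \<longleftrightarrow>
     b < length cs \<and>
     3/2 * (exp_int_table ! ((j - 64) div 64) * exp_frac_table ! ((j - 64) mod 64))
       \<le> sum_list (take (Suc b - a) (drop a cs))"

lemma poisson_interval_ge_if_certified: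
  assumes "a \<le> b" "certified_point j cs" "certified_window j cs a b"
  shows "3/2 * exp (-1) \<le> poisson_interval a b (real j / 64)"
proof -
  define x where "x = real j / 64"
  have j: "64 \<le> j" "j - 64 < 2368"
    using assms(2) by (auto simp: certified_point_def)
  then have x: "1 \<le> x"
    by (simp add: x_def)
  have x1: "x - 1 = real (j - 64) / 64"
    using j by (simp add: x_def of_nat_diff diff_divide_distrib)
  have "exp (x - 1) \<le> exp_int_table ! ((j - 64) div 64) * exp_frac_table ! ((j - 64) mod 64)"
    unfolding x1 by (rule exp_le_tables[OF j(2)])
  also have "3/2 * \<dots> \<le> sum_list (take (Suc b - a) (drop a cs))"
    using assms(3) by (simp add: certified_window_def)
  also have "\<dots> = (\<Sum>k = a..b. cs ! k)"
    using assms by (simp add: sum_list_take_drop certified_window_def)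
  also have "\<dots> \<le> (\<Sum>k = a..b. x ^ k / fact k)"
  proof (rule sum_mono)
    fix k assume "k \<in> {a..b}"
    then have "k < length cs" "cs \<noteq> []"
      using assms(3) by (auto simp: certified_window_def)
    then show "cs ! k \<le> x ^ k / fact k"
      using assms(2) x taylor_lower_chain_le[of x 0 cs k] by (simp add: certified_point_def x_def)
  qed
  finally have "3/2 * exp (x - 1) \<le> (\<Sum>k = a..b. x ^ k / fact k)"
    by simp
  then have "3/2 * exp (x - 1) * exp (- x) \<le> (\<Sum>k = a..b. x ^ k / fact k) * exp (- x)"
    by simp
  moreover have "exp (x - 1) * exp (- x) = exp (- 1)"
    by (simp flip: exp_add)
  ultimately show ?thesis
    by (simp add: poisson_interval_def poisson_prob_def sum_distrib_right x_def)
qed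

lemma le_sqrt_if_nonpos_or_square_le: "d \<le> 0 \<or> d\<^sup>2 \<le> x \<Longrightarrow> 0 \<le> x \<Longrightarrow> d \<le> sqrt x"
  by (auto intro: real_le_rsqrt order_trans[OF _ real_sqrt_ge_zero])

fun certified_cell :: "nat \<times> real list \<Rightarrow> nat \<times> real list \<Rightarrow> nat \<times> nat \<Rightarrow> bool" where
  "certified_cell (j, cs) (j', cs') (a, b) \<longleftrightarrow>
     j \<le> j' \<and> a \<le> b \<and>
     (real b - real j / 64 \<le> 0 \<or> (real b - real j / 64)\<^sup>2 \<le> real j / 64) \<and>
     (real j' / 64 - real a \<le> 0 \<or> (real j' / 64 - real a)\<^sup>2 \<le> real j' / 64) \<and>
     certified_window j cs a b \<and> certified_window j' cs' a b"

lemma poisson_sd_prob_ge_if_certified_cell: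
  assumes "certified_point j cs" "certified_point j' cs'" "certified_cell (j, cs) (j', cs') (a, b)"
    and "real j / 64 \<le> l" "l \<le> real j' / 64"
  shows "3/2 * exp (-1) \<le> poisson_sd_prob l"
proof (rule poisson_sd_prob_ge_on_interval)
  have cell: "a \<le> b" "certified_window j cs a b" "certified_window j' cs' a b"
    using assms(3) by simp_all
  show "1/4 \<le> real j / 64"
    using assms(1) by (simp add: certified_point_def)
  show "real b - real j / 64 \<le> sqrt (real j / 64)" "real j' / 64 - real a \<le> sqrt (real j' / 64)"
    using assms(3) by (auto intro!: le_sqrt_if_nonpos_or_square_le)
  show "3/2 * exp (-1) \<le> poisson_interval a b (real j / 64)"
    "3/2 * exp (-1) \<le> poisson_interval a b (real j' / 64)"
    using poisson_interval_ge_if_certified[OF cell(1) assms(1) cell(2)]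
      poisson_interval_ge_if_certified[OF cell(1) assms(2) cell(3)] by simp_all
qed (use assms in auto)

fun certified_cells :: "(nat \<times> real list) list \<Rightarrow> (nat \<times> nat) list \<Rightarrow> bool" where
  "certified_cells (p # q # ps) (w # ws) \<longleftrightarrow>
     certified_cell p q w \<and> (ps = [] \<and> ws = [] \<or> certified_cells (q # ps) ws)"
| "certified_cells _ _ \<longleftrightarrow> False"

lemma poisson_sd_prob_ge_if_certified_cells:
  assumes "list_all (\<lambda>(j, cs). certified_point j cs) ps" "certified_cells ps ws"
    and "real (fst (hd ps)) / 64 \<le> l" "l \<le> real (fst (last ps)) / 64"
  shows "3/2 * exp (-1) \<le> poisson_sd_prob l"
  using assms
proof (induction ps ws rule: certified_cells.induct)
  case (1 p q ps w ws)
  show ?case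
  proof (cases "l \<le> real (fst q) / 64")
    case True
    then show ?thesis
      using "1.prems" poisson_sd_prob_ge_if_certified_cell[of "fst p" "snd p" "fst q" "snd q" "fst w" "snd w" l]
      by auto
  next
    case False
    then have "ps \<noteq> []"
      using "1.prems"(4) by auto
    then show ?thesis
      using False "1.prems" by (intro "1.IH") auto
  qed
qed auto

definition certificate_points :: "(nat \<times> real list) list" where
  "certificate_points =
    [(64, [1, 1, 1/2]),
     (109, [1, 21289/12500, 145031/100000, 823353/1000000]),
     (157, [1, 7666/3125, 30089/10000, 6151/2500, 150891/100000]),
     (167, [1, 260937/100000, 340441/100000, 18507/6250, 96583/50000]),
     (206, [1, 103/32, 518017/100000, 555789/100000, 111809/25000, 71977/25000]),
     (256, [1, 4, 8, 53333/5000, 53333/5000, 53333/6250, 113777/20000]),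
     (308, [1, 77/16, 579/50, 92881/5000, 111747/5000, 26889/1250, 172537/10000, 118619/10000]),
     (339, [1, 529687/100000, 35071/2500, 30961/1250, 327993/10000, 347467/10000, 76687/2500,
       46423/2000]),
     (361, [1, 282031/50000, 159083/10000, 299109/10000, 42179/1000, 475831/10000, 44733/1000,
       18023/500, 31769/1250]),
     (414, [1, 207/32, 209223/10000, 451137/10000, 729573/10000, 188777/2000, 50881/500,
       940389/10000, 95049/1250, 546531/10000]),
     (419, [1, 654687/100000, 214307/10000, 5846/125, 38273/500, 100227/1000, 54681/500, 51141/500,
       418517/5000, 152221/2500]),
     (468, [1, 117/16, 267363/10000, 651697/10000, 59569/500, 174239/1000, 212353/1000, 221833/1000,
       202769/1000, 164749/1000, 15059/125]),
     (498, [1, 249/32, 302739/10000, 785229/10000, 152751/1000, 118859/500, 30829/100, 342697/1000,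
       166663/500, 72047/250, 112123/500]),
     (522, [1, 261/32, 166311/5000, 226079/2500, 36879/200, 150397/500, 408891/1000, 476431/1000,
       60717/125, 220099/500, 89759/250, 266217/1000]),
     (576, [1, 9, 81/2, 243/2, 2187/8, 19683/40, 92264/125, 949001/1000, 53381/50, 53381/50,
       480429/500, 196539/250, 589617/1000]),
     (632, [1, 79/8, 243789/5000, 80247/500, 396219/1000, 195633/250, 128791/100, 181687/100,
       224269/100, 61518/25, 60749/25, 54536/25, 89757/50, 136361/100]),
     (652, [1, 163/16, 20757/400, 88109/500, 89761/200, 22861/25, 38816/25, 56491/25, 287751/100,
       162859/50, 13273/4, 61463/20, 260897/100, 51113/25]),
     (687, [1, 107343/10000, 57613/1000, 103073/500, 138303/250, 118767/100, 212481/100, 65167/20,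
       109301/25, 130364/25, 11195/2, 546233/100, 244311/50, 80693/20, 309353/100]),
     (727, [1, 113593/10000, 161293/2500, 244291/1000, 173437/250, 15761/10, 298391/100, 484219/100,
       687553/100, 216949/25, 492881/50, 50898/5, 192723/20, 210501/25, 170797/25]),
     (743, [1, 116093/10000, 673883/10000, 130389/500, 756867/1000, 35147/20, 85007/25, 56393/10,
       818359/100, 52781/5, 12255, 64669/5, 125127/10, 55871/5, 92661/10, 717157/100]),
     (799, [1, 124843/10000, 779293/10000, 324299/1000, 25304/25, 252723/100, 131462/25, 46892/5,
       73177/5, 40603/2, 253451/10, 143826/5, 149631/5, 143696/5, 256279/10, 106649/5, 16643]),
     (802, [1, 7832/625, 392579/5000, 327967/1000, 20549/20, 64376/25, 537807/100, 96277/10,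
       75404/5, 209979/10, 263129/10, 299757/10, 313027/10, 301739/10, 270083/10, 225631/10,
       88357/5]),
     (855, [1, 133593/10000, 892359/10000, 198689/500, 66359/50, 70921/20, 15791/2, 75342/5, 25163,
       373513/10, 49899, 606017/10, 674667/10, 693317/10, 661591/10, 589229/10, 491983/10,
       193311/5]),
     (876, [1, 219/16, 468369/5000, 213693/500, 73123/50, 100087/25, 913293/100, 178581/10, 30554,
       92935/2, 636023/10, 395707/5, 451353/5, 190089/2, 929229/10, 847921/10, 725369/10,
       292014/5]),
     (911, [1, 142343/10000, 25327/250, 96137/200, 42764/25, 19479/4, 115529/10, 117463/5,
       418003/10, 330556/5, 941051/10, 121775, 144449, 158164, 160811, 152602, 135762, 113675,
       89894]),
     (950, [1, 148437/10000, 13771/125, 272551/500, 202283/100, 600527/100, 148567/10, 315041/10,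
       292274/5, 482049/5, 143108, 193114, 238877, 272756, 289194, 286181, 265499, 231823,
       191173]),
     (968, [1, 121/8, 57191/500, 23067/40, 43611/20, 164904/25, 83139/5, 359279/10, 679261/10,
       114153, 172656, 237402, 299225, 348136, 376111, 379245, 358505, 318964, 268018, 213356]),
     (1024, [1, 16, 128, 341333/500, 136533/50, 873811/100, 116508/5, 266304/5, 106521, 189370,
       302992, 440715, 587620, 723224, 826541, 881643, 881643, 829781, 737583, 621122, 496897]),
     (1081, [1, 84453/5000, 71323/500, 401563/500, 84783/25, 114563/10, 161253/5, 778189/10, 164301,
       308349, 520820, 799725, 1125650, 1462530, 1764500, 1986900, 2097490, 2083990, 1955540,
       1738430, 1468150, 1180850]),
     (1096, [1, 137/8, 18329/125, 104628/125, 7167/2, 61367/5, 350303/10, 856991/10, 183449, 349062,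
       597768, 930616, 1328060, 1749460, 2139960, 2443120, 2614900, 2634120, 2506070, 2258760,
       1934060, 1577170]),
     (1139, [1, 11123/625, 158363/1000, 187891/200, 104496/25, 74388/5, 441291/10, 112194, 249587,
       493540, 878346, 1421070, 2107550, 2885210, 3667690, 4351560, 4840260, 5067140, 5009950,
       4692700, 4175760, 3538830, 2862730]),
     (1169, [1, 11416/625, 20852/125, 50783/50, 463791/100, 84714/5, 257892/5, 134587, 307289,
       623647, 1139130, 1891530, 2879160, 4045350, 5277910, 6426950, 7337010, 7883230, 7999560,
       7690360, 7023460, 6108940, 5071980]),
     (1196, [1, 299/16, 174611/1000, 27192/25, 10163/2, 189921/10, 295762/5, 157915, 368879, 765936,
       1431340, 2431650, 3786780, 5443490, 7266080, 9052320, 10572800, 11622300, 12066200,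
       11867700, 11088800, 9867710, 8381940, 6810320]),
     (1241, [1, 96953/5000, 187997/1000, 30378/25, 147262/25, 22844, 147653/2, 204505, 495684,
       1067950, 2070820, 3650400, 5898620, 8798300, 12186000, 15752900, 19091100, 21775700,
       23458000, 23940200, 23210700, 21431900, 18889900, 15925500]),
     (1253, [1, 195781/10000, 191651/1000, 31268/25, 153042/25, 119851/5, 391076/5, 218758, 535358,
       1164580, 2280020, 4058040, 6620730, 9970880, 13943600, 18199300, 22269200, 25646400,
       27894900, 28743600, 28137200, 26232000, 23344200, 19871100, 16209900]),
     (1311, [1, 204843/10000, 52451/250, 35814/25, 733627/100, 300557/10, 102612, 300277, 768873,
       1749980, 3584720, 6675520, 11395300, 17955800, 26272300, 35878100, 45933700, 55348400,
       62987600, 67908500, 69553100, 67845300, 63171200, 56261800, 48020300, 39346600]),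
     (1313, [1, 51289/2500, 42089/200, 143913/100, 184529/25, 151429/5, 103555, 303499, 778308,
       1774160, 3639800, 6788430, 11605700, 18315200, 26839100, 36708000, 47067900, 56801600,
       64740000, 69904200, 71706400, 70052400, 65325800, 58269500, 49809800, 40875100]),
     (1369, [1, 106953/5000, 228779/1000, 40781/25, 872331/100, 186597/5, 133047, 406565, 1087080,
       2583700, 5526690, 10747200, 19157400, 31522200, 48162800, 68682100, 91822000, 115537000,
       137300000, 154575000, 165322000, 168397000, 163732000, 152275000, 135719000, 116124000,
       95537100]),
     (1385, [1, 108203/5000, 117079/500, 16891/10, 913829/100, 197758/5, 142653, 441014, 1192970,
       2868510, 6207630, 12212400, 22023600, 36661800, 56670300, 81758700, 110581000,
       140767000, 169238000, 192758000, 208570000, 214932000, 211421000, 198925000, 179369000,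
       155266000, 129232000]),
     (1426, [1, 55703/2500, 124113/500, 184359/100, 102693/10, 91525/2, 169940, 540925, 1506560,
       3729780, 8310410, 16833300, 31255500, 53570100, 85257700, 126643000, 176360000,
       231148000, 286125000, 335538000, 373810000, 396616000, 401686000, 389133000, 361265000,
       321977000, 275925000, 227701000]),
     (1457, [1, 28457/1250, 32392/125, 98323/50, 111919/10, 509581/10, 193348, 628812, 1789410,
       4526330, 10304400, 21326000, 40458300, 70850600, 115211000, 174856000, 248794000,
       333173000, 421382000, 504896000, 574713000, 623033000, 644715000, 638145000, 605323000,
       551222000, 482650000, 406956000]),
     (1484, [1, 371/16, 26883/100, 207783/100, 120449/10, 279291/5, 215868, 715062, 2072560, 5339720,
       12381400, 26099400, 50431600, 89952500, 148983000, 230302000, 333757000, 455234000,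
       586429000, 715674000, 829734000, 916164000, 965616000, 973487000, 940530000, 872341000,
       777977000, 668123000, 553289000]),
     (1528, [1, 191/8, 285007/1000, 113409/50, 135381/10, 323222/5, 257230, 877338, 2618300, 6945760,
       16583000, 35992600, 71610200, 131514000, 224278000, 356975000, 532673000, 748092000,
       992260000, 1246850000, 1488420000, 1692190000, 1836410000, 1906270000, 1896340000,
       1811000000, 1662980000, 1470500000, 1253860000]),
     (1542, [1, 240937/10000, 290253/1000, 233109/100, 140411/10, 135321/2, 271699, 935178, 2816490,
       7539970, 18166600, 39791000, 79892800, 148070000, 254825000, 409312000, 616366000,
       873562000, 1169290000, 1482760000, 1786260000, 2049410000, 2244450000, 2351180000,
       2360360000, 2274790000, 2108000000, 1881090000, 1618660000, 1344810000]),
     (1600, [1, 25, 625/2, 65104/25, 16276, 81380, 339083, 1211010, 3784400, 10512200, 26280500,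
       59728400, 124434000, 239296000, 427314000, 712190000, 1112790000, 1636450000,
       2272840000, 2990570000, 3738210000, 4450250000, 5057100000, 5496840000, 5725870000,
       5725870000, 5505640000, 5097810000, 4551610000, 3923800000, 3269830000]),
     (1659, [1, 129609/5000, 33597/100, 290299/100, 188127/10, 97532, 421368, 1560370, 5055960,
       14562200, 37747900, 88954200, 192154000, 383153000, 709431000, 1225980000, 1986230000,
       3028630000, 4361540000, 5950480000, 7712370000, 9519950000, 11217000000, 12641900000,
       13654200000, 14157600000, 14115000000, 13551300000, 12545500000, 11213800000,
       9689420000, 8102190000]),
     (1671, [1, 261093/10000, 42606/125, 74161/25, 193629/10, 101110, 439986, 1641100, 5356010,
       15538000, 40568700, 96293000, 209512000, 420786000, 784747000, 1365950000, 2229000000,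
       3423390000, 4965690000, 6823740000, 8908170000, 11075500000, 13144200000, 14921100000,
       16232500000, 16952800000, 17024100000, 16462500000, 15350900000, 13820700000,
       12028300000, 10130600000]),
     (1717, [1, 268281/10000, 359873/1000, 321823/100, 215847/10, 115815, 517849, 1984700, 6655720,
       19840000, 53227000, 129816000, 290226000, 598939000, 1147740000, 2052780000, 3442010000,
       5431920000, 8096010000, 11431600000, 15334400000, 19590100000, 23889300000, 27865400000,
       31149000000, 33426700000, 34491300000, 34271700000, 32837300000, 30378000000,
       27166100000, 23510100000, 19710300000]),
     (1741, [1, 272031/10000, 92501/250, 83877/25, 228171/10, 124139, 562828, 2187240, 7437470,
       22480200, 61153100, 151232000, 342831000, 717390000, 1393940000, 2527960000, 4298020000,
       6877620000, 10394000000, 14881500000, 20241100000, 26220000000, 32421100000,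
       38345800000, 43463500000, 47293700000, 49482100000, 49854300000, 48435400000,
       45434200000, 41198400000, 36152400000, 30733000000]),
     (1775, [1, 277343/10000, 96149/250, 7111/2, 246523/10, 136743, 632080, 2504330, 8682000,
       26754400, 74201600, 187085000, 432390000, 922466000, 1827420000, 3378820000, 5856840000,
       9555040000, 14722300000, 21490100000, 29800700000, 39357300000, 49615900000,
       59828900000, 69138200000, 76700100000, 81816500000, 84041800000, 83244500000,
       79611500000, 73599100000, 65845900000, 57068500000, 47962300000]),
     (1812, [1, 453/16, 200399/500, 378253/100, 133866/5, 151603, 715376, 2893440, 10240000,
       32213300, 91203900, 234746000, 553853000, 1206220000, 2439360000, 4604290000,
       8147430000, 13569000000, 21342900000, 31803700000, 45022100000, 60699400000,
       78115900000, 96158900000, 113437000000, 128467000000, 139893000000, 146693000000,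
       148330000000, 144813000000, 136667000000, 124818000000, 110434000000, 94747300000]),
     (1834, [1, 143281/5000, 410589/1000, 196099/50, 280973/10, 161032, 769095, 3148480, 11277900,
       35909100, 102902000, 268071000, 640159000, 1411110000, 2888360000, 5517970000,
       9882770000, 16659000000, 26521300000, 40000000000, 57312500000, 78207600000,
       101869000000, 126921000000, 151544000000, 173707000000, 191453000000, 203197000000,
       207959000000, 205493000000, 196288000000, 181447000000, 162487000000, 141099000000,
       118922000000]),
     (1883, [1, 147109/5000, 216411/500, 424481/100, 62445/2, 183724, 900917, 3786660, 13926300,
       45526400, 133947000, 358270000, 878414000, 1988040000, 4177990000, 8194950000,
       15069400000, 26080500000, 42629800000, 66013000000, 97111300000, 136056000000,
       181955000000, 232759000000, 285341000000, 335810000000, 380006000000, 414092000000,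
       435120000000, 441449000000, 432941000000, 410901000000, 377796000000, 336832000000,
       291477000000]),
     (1893, [1, 295781/10000, 54679/125, 21564/5, 318911/10, 188655, 930010, 3929700, 14529100,
       47749200, 141233000, 379764000, 936058000, 2129750000, 4499570000, 8872580000,
       16402100000, 28537800000, 46894100000, 73002000000, 107963000000, 152063000000,
       204442000000, 262913000000, 324019000000, 383354000000, 436111000000, 477753000000,
       504679000000, 514739000000, 507500000000, 484222000000, 447574000000, 401163000000,
       348989000000, 294926000000]),
     (1951, [1, 304843/10000, 464647/1000, 472149/100, 359829/10, 219383, 1114620, 4854070, 18496600,
       62650800, 190987000, 529283000, 1344570000, 3152950000, 6865400000, 13952400000,
       26583100000, 47668700000, 80730500000, 129527000000, 197427000000, 286592000000,
       397117000000, 526341000000, 668549000000, 815211000000, 955815000000, 1079160000000,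
       1174910000000, 1235040000000, 1254980000000, 1234100000000, 1175640000000,
       1086010000000, 973715000000, 848088000000, 718150000000]),
     (1953, [1, 76289/2500, 465601/1000, 473603/100, 361307/10, 220510, 1121500, 4889030, 18648900,
       63231400, 192954000, 535282000, 1361200000, 3195220000, 6964580000, 14168500000,
       27022500000, 48506300000, 82233300000, 132073000000, 201514000000, 292825000000,
       406169000000, 538891000000, 685191000000, 836361000000, 981618000000, 1109430000000,
       1209100000000, 1272290000000, 1294150000000, 1273920000000, 1214820000000,
       1123360000000, 1008230000000, 879050000000, 745132000000]),
     (2010, [1, 157031/5000, 19727/40, 129073/25, 405369/10, 254622, 1332780, 5979660, 23474800,
       81917200, 257271000, 734537000, 1922420000, 4644300000, 10418500000, 21813700000,
       42817900000, 79102900000, 138018000000, 228138000000, 358247000000, 535771000000,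
       764843000000, 1044380000000, 1366660000000, 1716860000000, 2073850000000, 2412290000000,
       2705740000000, 2930240000000, 3067590000000, 3107790000000, 3050120000000,
       2902810000000, 2681360000000, 2406040000000, 2099010000000, 1781670000000]),
     (2023, [1, 316093/10000, 19983/40, 21055/4, 415959/10, 262964, 1385350, 6255720, 24717400,
       86811200, 274404000, 788521000, 2077050000, 5050320000, 11402600000, 24028600000,
       47470500000, 88265400000, 155000000000, 257865000000, 407547000000, 613443000000,
       881388000000, 1211300000000, 1595350000000, 2017120000000, 2452300000000, 2870950000000,
       3241030000000, 3532650000000, 3722160000000, 3795320000000, 3748990000000,
       3591000000000, 3338500000000, 3015080000000, 2647350000000, 2261650000000]),
     (2069, [1, 323281/10000, 522553/1000, 112621/20, 455103/10, 294252, 1585430, 7321990, 29588200,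
       106281000, 343586000, 1009770000, 2720330000, 6764850000, 15621000000, 33666500000,
       68023400000, 129356000000, 232324000000, 395294000000, 638955000000, 983629000000,
       1445400000000, 2031610000000, 2736580000000, 3538740000000, 4400030000000,
       5268320000000, 6082670000000, 6780730000000, 7306940000000, 7619980000000,
       7698110000000, 7541370000000, 7170530000000, 6623130000000, 5947590000000,
       5196600000000, 4420950000000]),
     (2094, [1, 327187/10000, 535257/1000, 145941/25, 47750, 312464, 1703900, 7964210, 32572300,
       118413000, 387432000, 1152390000, 3142060000, 7908020000, 18481400000, 40312500000,
       82435900000, 158658000000, 288393000000, 496624000000, 812445000000, 1265810000000,
       1882530000000, 2678000000000, 3650860000000, 4778060000000, 6012770000000,
       7286300000000, 8514230000000, 9606030000000, 10476500000000, 11057300000000,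
       11305600000000, 11209200000000, 10786700000000, 10083600000000, 9164520000000,
       8104090000000, 6977780000000]),
     (2128, [1, 133/4, 552781/1000, 122533/20, 509277/10, 338669, 1876790, 8914750, 37051900,
       136886000, 455145000, 1375770000, 3812020000, 9749970000, 23156100000, 51329300000,
       106668000000, 208630000000, 385385000000, 674423000000, 1121220000000, 1775260000000,
       2683060000000, 3878770000000, 5373710000000, 7147030000000, 9139950000000,
       11255600000000, 13366000000000, 15324800000000, 16984900000000, 18217600000000,
       18929200000000, 19072600000000, 18651800000000, 17719200000000, 16365600000000,
       14706900000000, 12868500000000, 10971200000000]),
     (2164, [1, 541/16, 285821/500, 161072/25, 272312/5, 368301, 2075520, 10025500, 42373400,
       159194000, 538274000, 1654580000, 4662120000, 12125900000, 29286200000, 66015900000,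
       139510000000, 277481000000, 521240000000, 927601000000, 1568220000000, 2525020000000,
       3880780000000, 5705160000000, 8037730000000, 10871000000000, 14137500000000,
       17704600000000, 21379800000000, 24927700000000, 28095500000000, 30644400000000,
       32380100000000, 33177300000000, 32994300000000, 31874800000000, 29937900000000,
       27358700000000, 24343800000000, 21105700000000]),
     (2186, [1, 170781/5000, 583323/1000, 664137/100, 56711, 387407, 2205390, 10761100, 45944800,
       174366000, 595568000, 1849300000, 5263760000, 13830000000, 33741400000, 76831900000,
       164018000000, 329543000000, 625330000000, 1124150000000, 1919830000000, 3122580000000,
       4847980000000, 7199510000000, 10246100000000, 13998700000000, 18390100000000,
       23264300000000, 28379300000000, 33425100000000, 38055800000000, 41930400000000,
       44755700000000, 46323800000000, 46536600000000, 45414700000000, 43088700000000,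
       39776900000000, 35753400000000, 31312800000000, 26738100000000]),
     (2234, [1, 174531/5000, 304611/500, 141771/20, 309293/5, 431850, 2512370, 12528200, 54664000,
       212012000, 740054000, 2348400000, 6831150000, 18342200000, 45732600000, 106423000000,
       232176000000, 476729000000, 924490000000, 1698440000000, 2964300000000, 4927260000000,
       7817820000000, 11864800000000, 17256400000000, 24094200000000, 32347600000000,
       41819700000000, 52134600000000, 62752500000000, 73015100000000, 82215500000000,
       89682300000000, 94862800000000, 97391300000000, 97130400000000, 94179300000000,
       88849800000000, 81616100000000, 73049000000000, 63746600000000]),
     (2245, [1, 350781/10000, 153809/250, 719377/100, 630859/10, 442587, 2587520, 12966400, 56854600,
       221594000, 777310000, 2478770000, 7245880000, 19551600000, 48988100000, 114560000000,
       251159000000, 518246000000, 1009940000000, 1864560000000, 3270260000000, 5462590000000,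
       8709880000000, 13283700000000, 19415300000000, 27242000000000, 36753700000000,
       47750000000000, 59820700000000, 72358500000000, 84606600000000, 95736800000000,
       104945000000000, 111553000000000, 115090000000000, 115346000000000, 112392000000000,
       106554000000000, 98360900000000, 88469600000000, 77583600000000, 66377700000000]),
     (2304, [1, 36, 648, 7776, 69984, 503884, 3023300, 15548400, 69967800, 279871000, 1007530000,
       3297370000, 9892110000, 27393500000, 70440400000, 169056000000, 380376000000,
       805502000000, 1611000000000, 3052420000000, 5494350000000, 9418880000000,
       15412700000000, 24124200000000, 36186300000000, 52108200000000, 72149800000000,
       96199700000000, 123685000000000, 153540000000000, 184248000000000, 213965000000000,
       240710000000000, 262592000000000, 278038000000000, 285981000000000, 285981000000000,
       278251000000000, 263606000000000, 243328000000000, 218995000000000, 192288000000000])]"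

definition certificate_windows :: "(nat \<times> nat) list" where
  "certificate_windows =
    [(1, 2), (1, 3), (1, 4), (2, 4), (2, 5), (3, 6), (3, 7), (4, 7), (4, 8), (4, 9), (5, 9),
     (5, 10), (6, 10), (6, 11), (7, 12), (7, 13), (8, 13), (8, 14), (9, 14), (9, 15), (9, 16),
     (10, 16), (10, 17), (11, 17), (11, 18), (12, 18), (12, 19), (13, 20), (13, 21), (14, 21),
     (14, 22), (15, 22), (15, 23), (16, 23), (16, 24), (16, 25), (17, 25), (17, 26), (18, 26),
     (18, 27), (19, 27), (19, 28), (20, 28), (20, 29), (21, 30), (21, 31), (22, 31), (22, 32),
     (23, 32), (23, 33), (24, 33), (24, 34), (25, 34), (25, 35), (25, 36), (26, 36), (26, 37),
     (27, 37), (27, 38), (28, 38), (28, 39), (29, 39), (29, 40), (30, 40), (30, 41)]"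

lemma certificate_points_valid: "list_all (\<lambda>(j, cs). certified_point j cs) certificate_points"
  by (simp add: certificate_points_def certified_point_def)

lemma certificate_cells_valid: "certified_cells certificate_points certificate_windows"
  by (simp add: certificate_points_def certificate_windows_def certified_window_def
      exp_int_table_def exp_frac_table_def power2_eq_square)

lemma poisson_sd_prob_ge_moderate:
  assumes "1 \<le> l" "l \<le> 36"
  shows "3/2 * exp (-1) \<le> poisson_sd_prob l"
  using poisson_sd_prob_ge_if_certified_cells[OF certificate_points_valid certificate_cells_valid] assms
  by (simp add: certificate_points_def)

section \<open>Rates of at least 36\<close>

text \<open>Substituting \<open>s = 6 + a\<close> (and \<open>x\<close> or \<open>y\<close> as \<open>b \<ge> 0\<close> above its lower bound), each of
  the following four inequalities says that a polynomial in \<open>a, b \<ge> 0\<close> with nonnegative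
  coefficients is nonnegative.\<close>

lemma step_up_polynomial_ineq:
  fixes s x l :: real
  assumes "6 \<le> s" "s - 1/8 \<le> x" "l = s\<^sup>2"
  shows "((x + 1) ^ 3 + 3 * l * (x + 1) + l * ((x + 1)\<^sup>2 + 2 * l)) * (x ^ 3 + 3 * l * x)
    \<le> (x\<^sup>2 + 2 * l) * (l + x + 1/8) * ((x + 1) ^ 3 + 3 * l * (x + 1))" (is "?A \<le> ?B")
proof -
  define a b where "a = s - 6" and "b = x - s + 1/8"
  have "?B - ?A = (75168179527/262144) + (9307429/32768) * b + (140147/2048) * b\<^sup>2 + (9941/256) * b^3
      + (259/64) * b^4 + (1/8) * b^5 + (9342598981/32768) * a + (197147/1024) * a * b
      + (6831/256) * a * b\<^sup>2 + (187/16) * a * b^3 + (5/8) * a * b^4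
      + (484156961/4096) * a\<^sup>2 + (25349/512) * a\<^sup>2 * b + (211/64) * a\<^sup>2 * b\<^sup>2
      + (7/8) * a\<^sup>2 * b^3 + (13390545/512) * a^3 + (183/32) * a^3 * b + (1/8) * a^3 * b\<^sup>2
      + (104231/32) * a^4 + (1/4) * a^4 * b + (433/2) * a^5 + 6 * a^6"
    (is "_ = ?P") unfolding assms(3) a_def b_def by algebra
  moreover have "0 \<le> a" "0 \<le> b"
    using assms by (simp_all add: a_def b_def)
  then have "0 \<le> ?P"
    by (intro add_nonneg_nonneg mult_nonneg_nonneg zero_le_power) auto
  ultimately show ?thesis
    by linarith
qed

lemma step_down_polynomial_ineq:
  fixes s y l :: real
  assumes "6 \<le> s" "s + 1 \<le> y" "l = s\<^sup>2"
  shows "(l - y + 1) * ((y + 1) ^ 3 + 3 * l * (y + 1) + l * ((y + 1)\<^sup>2 + 2 * l)) * (y ^ 3 + 3 * l * y)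
    \<le> l\<^sup>2 * (y\<^sup>2 + 2 * l) * ((y + 1) ^ 3 + 3 * l * (y + 1))" (is "?A \<le> ?B")
proof -
  define a b where "a = s - 6" and "b = y - s - 1"
  have "?B - ?A = 8990976 + 2041352 * b + 921204 * b\<^sup>2 + 170094 * b^3 + 18585 * b^4 + 1257 * b^5
      + 51 * b^6 + 1 * b^7 + 11936072 * a + 1735824 * a * b + 671142 * a * b\<^sup>2
      + 98472 * a * b^3 + 7989 * a * b^4 + 354 * a * b^5 + 7 * a * b^6 + 6989644 * a\<^sup>2
      + 612160 * a\<^sup>2 * b + 195727 * a\<^sup>2 * b\<^sup>2 + 21397 * a\<^sup>2 * b^3 + 1147 * a\<^sup>2 * b^4
      + 25 * a\<^sup>2 * b^5 + 2354152 * a^3 + 114482 * a^3 * b + 28563 * a^3 * b\<^sup>2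
      + 2068 * a^3 * b^3 + 55 * a^3 * b^4 + 498038 * a^4 + 11957 * a^4 * b
      + 2086 * a^4 * b\<^sup>2 + 75 * a^4 * b^3 + 67683 * a^5 + 660 * a^5 * b + 61 * a^5 * b\<^sup>2
      + 5764 * a^6 + 15 * a^6 * b + 281 * a^7 + 6 * a^8"
    (is "_ = ?P") unfolding assms(3) a_def b_def by algebra
  moreover have "0 \<le> a" "0 \<le> b"
    using assms by (simp_all add: a_def b_def)
  then have "0 \<le> ?P"
    by (intro add_nonneg_nonneg mult_nonneg_nonneg zero_le_power) auto
  ultimately show ?thesis
    by linarith
qed

lemma right_estimate_polynomial_ineq:
  fixes s x l :: real
  assumes "6 \<le> s" "x = s - 1/8" "l = s\<^sup>2"
  shows "31/25 * (l * (x\<^sup>2 + 2 * l)) * (6 * l)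
    \<le> (s - 1) * (6 * l + (s - 2) * (2 * s - 1)) * (x ^ 3 + 3 * l * x)" (is "?A \<le> ?B")
proof -
  define a where "a = s - 6"
  have "?B - ?A = (196524371/3200) + (1525837757/12800) * a + (958448557/12800) * a\<^sup>2
      + (4501107/200) * a^3 + (2864807/800) * a^4 + (14617/50) * a^5 + (242/25) * a^6"
    (is "_ = ?P") unfolding assms(2,3) a_def by algebra
  moreover have "0 \<le> a"
    using assms by (simp add: a_def)
  then have "0 \<le> ?P"
    by (intro add_nonneg_nonneg mult_nonneg_nonneg zero_le_power) auto
  ultimately show ?thesis
    by linarith
qed

lemma left_estimate_polynomial_ineq:
  fixes s x l :: real
  assumes "6 \<le> s" "x = s + 1" "l = s\<^sup>2"
  shows "31/25 * (x ^ 3 + 3 * l * x + l * (x\<^sup>2 + 2 * l)) * (3 * s)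
    \<le> (s - 1) * (4 * s - 1) * (x ^ 3 + 3 * l * x)" (is "?A \<le> ?B")
proof -
  define a where "a = s - 6"
  have "?B - ?A = (23147/5) + (275269/25) * a + (28802/5) * a\<^sup>2 + (31567/25) * a^3 + (3172/25) * a^4
      + (121/25) * a^5"
    (is "_ = ?P") unfolding assms(2,3) a_def by algebra
  moreover have "0 \<le> a"
    using assms by (simp add: a_def)
  then have "0 \<le> ?P"
    by (intro add_nonneg_nonneg mult_nonneg_nonneg zero_le_power) auto
  ultimately show ?thesis
    by linarith
qed

lemma divide_le_divide_cross:
  fixes a b c d :: real
  assumes "0 < b" "0 < d" "a * d \<le> c * b"
  shows "a / b \<le> c / d"
  using assms by (simp add: divide_simps mult.commute)

text \<open>\<open>tail_factor l x \<approx> l / x\<close> bounds the mass of a Poisson tail starting about \<open>x\<close> away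
  from the mean, relative to the adjacent probability; the cubic correction is what makes the
  one-step recursions \<open>tail_factor_step_up\<close> and \<open>tail_factor_step_down\<close> hold.\<close>

definition tail_factor :: "real \<Rightarrow> real \<Rightarrow> real" where
  "tail_factor l x = l * (x\<^sup>2 + 2 * l) / (x ^ 3 + 3 * l * x)"

lemma tail_factor_denom_pos: "0 < x \<Longrightarrow> 0 < l \<Longrightarrow> 0 < x ^ 3 + 3 * l * (x::real)"
  by (simp add: add_pos_pos)

lemma tail_factor_nonneg: "0 < x \<Longrightarrow> 0 < l \<Longrightarrow> 0 \<le> tail_factor l x"
  unfolding tail_factor_def by (simp add: tail_factor_denom_pos less_imp_le)

lemma tail_factor_antimono:
  assumes "0 < l" "0 < y" "y \<le> x"
  shows "tail_factor l x \<le> tail_factor l y"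
proof -
  have "(y\<^sup>2 + 2 * l) * (x ^ 3 + 3 * l * x) - (x\<^sup>2 + 2 * l) * (y ^ 3 + 3 * l * y)
      = (x - y) * (x\<^sup>2 * y\<^sup>2 + l * ((x - y)\<^sup>2 + x\<^sup>2 + y\<^sup>2 + x * y) + 6 * l\<^sup>2)"
    by algebra
  moreover have "0 \<le> (x - y) * (x\<^sup>2 * y\<^sup>2 + l * ((x - y)\<^sup>2 + x\<^sup>2 + y\<^sup>2 + x * y) + 6 * l\<^sup>2)"
    using assms by (intro mult_nonneg_nonneg add_nonneg_nonneg) auto
  ultimately have "(x\<^sup>2 + 2 * l) * (y ^ 3 + 3 * l * y) \<le> (y\<^sup>2 + 2 * l) * (x ^ 3 + 3 * l * x)"
    by linarith
  then have "l * (x\<^sup>2 + 2 * l) * (y ^ 3 + 3 * l * y) \<le> l * (y\<^sup>2 + 2 * l) * (x ^ 3 + 3 * l * x)"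
    using assms by (simp add: mult.assoc mult_left_mono)
  then show ?thesis
    unfolding tail_factor_def using assms by (intro divide_le_divide_cross tail_factor_denom_pos) auto
qed

lemma tail_factor_step_up:
  assumes "6 \<le> s" "l = s\<^sup>2" "s - 1/8 \<le> x"
  shows "l * (1 + tail_factor l (x + 1)) \<le> tail_factor l x * (l + x + 1/8)"
proof -
  have pos: "0 < l" "0 < x ^ 3 + 3 * l * x" "0 < (x + 1) ^ 3 + 3 * l * (x + 1)"
    using assms by (simp_all add: tail_factor_denom_pos)
  have "l * (1 + tail_factor l (x + 1))
      = l * ((x + 1) ^ 3 + 3 * l * (x + 1) + l * ((x + 1)\<^sup>2 + 2 * l)) / ((x + 1) ^ 3 + 3 * l * (x + 1))"
    using pos unfolding tail_factor_def by (simp add: field_simps)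
  also have "\<dots> \<le> l * ((x\<^sup>2 + 2 * l) * (l + x + 1/8)) / (x ^ 3 + 3 * l * x)"
    using mult_left_mono[OF step_up_polynomial_ineq[OF assms(1,3,2)], of l] pos
    by (intro divide_le_divide_cross) (simp_all add: ac_simps)
  also have "\<dots> = tail_factor l x * (l + x + 1/8)"
    unfolding tail_factor_def by simp
  finally show ?thesis .
qed

lemma tail_factor_step_down:
  assumes "6 \<le> s" "l = s\<^sup>2" "s + 1 \<le> y"
  shows "(l - y + 1) * (1 + tail_factor l (y + 1)) \<le> l * tail_factor l y"
proof -
  have pos: "0 < l" "0 < y ^ 3 + 3 * l * y" "0 < (y + 1) ^ 3 + 3 * l * (y + 1)"
    using assms by (simp_all add: tail_factor_denom_pos)
  have "(l - y + 1) * (1 + tail_factor l (y + 1))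
      = (l - y + 1) * ((y + 1) ^ 3 + 3 * l * (y + 1) + l * ((y + 1)\<^sup>2 + 2 * l)) / ((y + 1) ^ 3 + 3 * l * (y + 1))"
    using pos unfolding tail_factor_def by (simp add: field_simps)
  also have "\<dots> \<le> l\<^sup>2 * (y\<^sup>2 + 2 * l) / (y ^ 3 + 3 * l * y)"
    using step_down_polynomial_ineq[OF assms(1,3,2)] pos by (intro divide_le_divide_cross) simp_all
  also have "\<dots> = l * tail_factor l y"
    unfolding tail_factor_def by (simp add: power2_eq_square)
  finally show ?thesis .
qed

lemma tail_factor_right_estimate:
  assumes "6 \<le> s" "l = s\<^sup>2"
  shows "31/25 * tail_factor l (s - 1/8) \<le> (s - 1) * (1 + (s - 2) * (2 * s - 1) / (6 * l))"
proof -
  define x where "x = s - 1/8"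
  have pos: "0 < l" "0 < x ^ 3 + 3 * l * x"
    using assms by (simp_all add: x_def tail_factor_denom_pos)
  have "31/25 * tail_factor l x = 31/25 * (l * (x\<^sup>2 + 2 * l)) / (x ^ 3 + 3 * l * x)"
    unfolding tail_factor_def by simp
  also have "\<dots> \<le> (s - 1) * (6 * l + (s - 2) * (2 * s - 1)) / (6 * l)"
    using right_estimate_polynomial_ineq[OF assms(1) x_def assms(2)] pos
    by (intro divide_le_divide_cross) simp_all
  also have "\<dots> = (s - 1) * (1 + (s - 2) * (2 * s - 1) / (6 * l))"
    using pos by (simp add: field_simps)
  finally show ?thesis
    by (simp add: x_def)
qed

lemma tail_factor_left_estimate:
  assumes "6 \<le> s" "l = s\<^sup>2"
  shows "31/25 * (1 + tail_factor l (s + 1)) \<le> (s - 1) * (1 + (s - 1) / (3 * s))"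
proof -
  define x where "x = s + 1"
  have pos: "0 < s" "0 < x ^ 3 + 3 * l * x"
    using assms by (simp_all add: x_def tail_factor_denom_pos)
  have "31/25 * (1 + tail_factor l x) = 31/25 * (x ^ 3 + 3 * l * x + l * (x\<^sup>2 + 2 * l)) / (x ^ 3 + 3 * l * x)"
    using pos unfolding tail_factor_def by (simp add: field_simps)
  also have "\<dots> \<le> (s - 1) * (4 * s - 1) / (3 * s)"
    using left_estimate_polynomial_ineq[OF assms(1) x_def assms(2)] pos
    by (intro divide_le_divide_cross) simp_all
  also have "\<dots> = (s - 1) * (1 + (s - 1) / (3 * s))"
    using pos by (simp add: field_simps)
  finally show ?thesis
    by (simp add: x_def)
qed

lemma poisson_prob_mass_split:
  assumes "a \<le> Suc b"
  shows "(\<Sum>i<a. poisson_prob l i) + poisson_interval a b l + (\<Sum>j. poisson_prob l (Suc b + j)) = 1"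
proof -
  have "1 = (\<Sum>k. poisson_prob l k)"
    using sums_poisson_prob by (simp add: sums_iff)
  also have "\<dots> = (\<Sum>j. poisson_prob l (j + Suc b)) + (\<Sum>i<Suc b. poisson_prob l i)"
    by (rule suminf_split_initial_segment[OF sums_summable[OF sums_poisson_prob]])
  also have "(\<Sum>i<Suc b. poisson_prob l i) = (\<Sum>i<a. poisson_prob l i) + poisson_interval a b l"
  proof -
    have "{..<Suc b} = {..<a} \<union> {a..b}"
      using assms by auto
    then show ?thesis
      unfolding poisson_interval_def by (simp add: sum.union_disjoint ivl_disj_int_one(4))
  qed
  finally show ?thesis
    by (simp add: add.commute add.left_commute)
qed

locale large_rate =
  fixes l s :: real
  assumes l_ge: "36 \<le> l" and s_def: "s = sqrt l"
begin

lemma s_ge: "6 \<le> s"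
  using real_le_rsqrt[of 6 l] l_ge s_def by simp

lemma l_eq: "l = s\<^sup>2"
  using l_ge s_def by simp

lemma l_pos: "0 < l"
  using l_ge by simp

lemma prob_nonneg: "0 \<le> poisson_prob l k"
  using l_pos by (simp add: poisson_prob_nonneg)

lemma prob_pred: "poisson_prob l k = poisson_prob l (Suc k) * (real (Suc k) / l)"
  using l_pos by (simp add: poisson_prob_Suc field_simps del: of_nat_Suc)

definition lo :: nat where "lo = nat \<lceil>l - s\<rceil>"
definition mid :: nat where "mid = nat \<lfloor>l\<rfloor>"
definition hi :: nat where "hi = nat \<lfloor>l + s\<rfloor>"
definition k0 :: nat where "k0 = lo - 1"

definition hi_excess :: real where "hi_excess = real hi - l"
definition k0_gap :: real where "k0_gap = l - real k0"

lemma hi_bounds: "real hi \<le> l + s" "l + s < real hi + 1"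
  using l_ge s_ge by (simp_all add: hi_def)

lemma mid_bounds: "real mid \<le> l" "l < real mid + 1"
  using l_ge by (simp_all add: mid_def)

lemma s_plus_one_le: "s + 1 \<le> l"
proof -
  have "s * 2 \<le> s * s"
    using s_ge by (intro mult_left_mono) auto
  then show ?thesis
    using l_eq s_ge unfolding power2_eq_square by linarith
qed

lemma lo_bounds: "l - s \<le> real lo" "real lo < l - s + 1"
  using s_plus_one_le by (simp_all add: lo_def) linarith

lemma lo_eq: "lo = Suc k0" and k0_eq: "real k0 = real lo - 1"
proof -
  have "1 \<le> lo"
    using lo_bounds s_plus_one_le by linarith
  then show "lo = Suc k0" "real k0 = real lo - 1"
    by (simp_all add: k0_def of_nat_diff)
qed

lemma k0_less_mid: "k0 < mid" and mid_less_hi: "mid < hi"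
  using k0_eq lo_bounds mid_bounds hi_bounds s_ge by linarith+

lemma hi_excess_bounds: "s - 1 < hi_excess" "hi_excess \<le> s"
  using hi_bounds by (simp_all add: hi_excess_def)

lemma k0_gap_bounds: "s < k0_gap" "k0_gap \<le> s + 1"
  using k0_eq lo_bounds by (simp_all add: k0_gap_def)

lemma right_tail_partial_le:
  "hi \<le> k \<Longrightarrow> (\<Sum>j<N. poisson_prob l (Suc k + j)) \<le> tail_factor l (real k + 1 - l - 1/8) * poisson_prob l k"
proof (induction N arbitrary: k)
  case 0
  have "0 < real k + 1 - l - 1/8"
    using 0 hi_bounds s_ge by linarith
  then show ?case
    using tail_factor_nonneg[OF _ l_pos] prob_nonneg by simp
next
  case (Suc N)
  define x where "x = real k + 1 - l - 1/8"
  have x: "s - 1/8 \<le> x"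
    using Suc.prems hi_bounds unfolding x_def by linarith
  have "(\<Sum>j<Suc N. poisson_prob l (Suc k + j))
      = poisson_prob l (Suc k) + (\<Sum>j<N. poisson_prob l (Suc (Suc k) + j))"
    unfolding sum.lessThan_Suc_shift by simp
  also have "\<dots> \<le> poisson_prob l (Suc k) * (1 + tail_factor l (x + 1))"
    using Suc.IH[of "Suc k"] Suc.prems by (simp add: x_def algebra_simps)
  also have "\<dots> = poisson_prob l k / real (Suc k) * (l * (1 + tail_factor l (x + 1)))"
    by (simp add: poisson_prob_Suc field_simps del: of_nat_Suc)
  also have "\<dots> \<le> poisson_prob l k / real (Suc k) * (tail_factor l x * (l + x + 1/8))"
    using tail_factor_step_up[OF s_ge l_eq x] prob_nonneg[of k] by (intro mult_left_mono) auto
  also have "\<dots> = tail_factor l x * poisson_prob l k"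
    by (simp add: x_def)
  finally show ?case
    unfolding x_def .
qed

lemma right_tail_le: "(\<Sum>j. poisson_prob l (Suc hi + j)) \<le> tail_factor l (s - 1/8) * poisson_prob l hi"
proof -
  have "summable (\<lambda>j. poisson_prob l (j + Suc hi))"
    using sums_summable[OF sums_poisson_prob] by (rule summable_ignore_initial_segment)
  then have "summable (\<lambda>j. poisson_prob l (Suc hi + j))"
    by (simp add: add.commute)
  then have "(\<Sum>j. poisson_prob l (Suc hi + j)) \<le> tail_factor l (real hi + 1 - l - 1/8) * poisson_prob l hi"
    using right_tail_partial_le[OF order_refl] by (rule suminf_le_const)
  also have "\<dots> \<le> tail_factor l (s - 1/8) * poisson_prob l hi"
    using hi_bounds s_ge prob_nonneg[of hi]
    by (intro mult_right_mono tail_factor_antimono l_pos) auto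
  finally show ?thesis .
qed

lemma prob_hi_minus_ge:
  "j \<le> hi - Suc mid \<Longrightarrow>
     poisson_prob l hi * (1 + (real j * hi_excess - real j * (real j - 1) / 2) / l) \<le> poisson_prob l (hi - j)"
proof (induction j)
  case 0
  then show ?case by simp
next
  case (Suc j)
  define B where "B = (real j * hi_excess - real j * (real j - 1) / 2) / l"
  define z where "z = (hi_excess - real j) / l"
  have j: "real j \<le> hi_excess" "Suc j \<le> hi"
    using Suc.prems mid_bounds unfolding hi_excess_def by linarith+
  have "0 \<le> real j * (hi_excess - (real j - 1) / 2)"
    using j by (intro mult_nonneg_nonneg) auto
  then have B: "0 \<le> B"
    unfolding B_def using l_pos by (simp add: algebra_simps)
  have z: "0 \<le> z"
    unfolding z_def using j l_pos by simp
  have "poisson_prob l hi * (1 + B + z) \<le> poisson_prob l hi * ((1 + B) * (1 + z))"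
    using B z prob_nonneg[of hi] by (intro mult_left_mono) (auto simp: algebra_simps)
  also have "\<dots> = (poisson_prob l hi * (1 + B)) * (1 + z)"
    by (simp only: mult.assoc)
  also have "\<dots> \<le> poisson_prob l (hi - j) * (1 + z)"
    using Suc.IH Suc.prems z unfolding B_def by (intro mult_right_mono) auto
  also have "\<dots> = poisson_prob l (hi - Suc j)"
    using prob_pred[of "hi - Suc j"] j l_pos
    by (simp add: Suc_diff_Suc z_def hi_excess_def of_nat_diff field_simps)
  also have "1 + B + z = 1 + (real (Suc j) * hi_excess - real (Suc j) * (real (Suc j) - 1) / 2) / l"
    unfolding B_def z_def using l_pos by (simp add: field_simps)
  finally show ?case .
qed

definition right_mass :: "nat \<Rightarrow> real" where
  "right_mass n = (\<Sum>j<n. 1 + (real j * hi_excess - real j * (real j - 1) / 2) / l)"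

lemma right_mass_eq:
  "right_mass n = real n + (hi_excess * real n * (real n - 1) / 2 - real n * (real n - 1) * (real n - 2) / 6) / l"
  by (induction n) (simp_all add: right_mass_def, simp add: field_simps l_pos[THEN less_imp_neq, symmetric])

lemma right_centre_ge: "poisson_prob l hi * right_mass (hi - mid) \<le> (\<Sum>k = Suc mid..hi. poisson_prob l k)"
proof -
  have "poisson_prob l hi * right_mass (hi - mid) \<le> (\<Sum>j<hi - mid. poisson_prob l (hi - j))"
    unfolding right_mass_def sum_distrib_left
    by (intro sum_mono prob_hi_minus_ge) auto
  also have "\<dots> = (\<Sum>k = Suc mid..hi. poisson_prob l k)"
    using mid_less_hi
    by (intro sum.reindex_bij_witness[of _ "\<lambda>k. hi - k" "\<lambda>j. hi - j"]) auto
  finally show ?thesis .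
qed

lemma right_mass_ge: "(s - 1) * (1 + (s - 2) * (2 * s - 1) / (6 * l)) \<le> right_mass (hi - mid)"
proof -
  define n where "n = real (hi - mid)"
  have n: "hi_excess \<le> n" "n < hi_excess + 1"
    using mid_less_hi mid_bounds by (simp_all add: n_def hi_excess_def of_nat_diff)
  have "(s - 2) * (2 * s - 1) \<le> (n - 1) * (3 * hi_excess - n + 2)"
    using n hi_excess_bounds s_ge by (intro mult_mono) auto
  then have "(s - 2) * (2 * s - 1) / (6 * l) \<le> (n - 1) * (3 * hi_excess - n + 2) / (6 * l)"
    using l_pos by (intro divide_right_mono) auto
  moreover have "0 \<le> (s - 2) * (2 * s - 1) / (6 * l)"
    using s_ge l_pos by simp
  ultimately have "(s - 1) * (1 + (s - 2) * (2 * s - 1) / (6 * l))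
      \<le> n * (1 + (n - 1) * (3 * hi_excess - n + 2) / (6 * l))"
    using n hi_excess_bounds s_ge by (intro mult_mono) auto
  also have "\<dots> = right_mass (hi - mid)"
    using l_pos by (simp add: right_mass_eq n_def field_simps)
  finally show ?thesis .
qed

lemma right_tail_vs_centre:
  "31/25 * (\<Sum>j. poisson_prob l (Suc hi + j)) \<le> (\<Sum>k = Suc mid..hi. poisson_prob l k)"
proof -
  have "31/25 * (\<Sum>j. poisson_prob l (Suc hi + j)) \<le> 31/25 * tail_factor l (s - 1/8) * poisson_prob l hi"
    using right_tail_le by simp
  also have "\<dots> \<le> (s - 1) * (1 + (s - 2) * (2 * s - 1) / (6 * l)) * poisson_prob l hi"
    using tail_factor_right_estimate[OF s_ge l_eq] prob_nonneg by (intro mult_right_mono) auto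
  also have "\<dots> \<le> right_mass (hi - mid) * poisson_prob l hi"
    using right_mass_ge prob_nonneg by (intro mult_right_mono) auto
  also have "\<dots> \<le> (\<Sum>k = Suc mid..hi. poisson_prob l k)"
    using right_centre_ge by (simp add: mult.commute)
  finally show ?thesis .
qed

lemma left_tail_partial_le:
  "k \<le> k0 \<Longrightarrow> (\<Sum>i<k. poisson_prob l i) \<le> tail_factor l (l - real k + 1) * poisson_prob l k"
proof (induction k)
  case 0
  then show ?case
    using tail_factor_nonneg[OF _ l_pos, of "l + 1"] prob_nonneg l_pos by simp
next
  case (Suc k)
  define y where "y = l - real k"
  have y: "s + 1 \<le> y"
    using Suc.prems k0_eq lo_bounds unfolding y_def by linarith
  have "(\<Sum>i<Suc k. poisson_prob l i) \<le> poisson_prob l k * (1 + tail_factor l (y + 1))"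
    using Suc by (simp add: y_def algebra_simps)
  also have "\<dots> = poisson_prob l (Suc k) / l * ((l - y + 1) * (1 + tail_factor l (y + 1)))"
    by (subst prob_pred) (simp add: y_def)
  also have "\<dots> \<le> poisson_prob l (Suc k) / l * (l * tail_factor l y)"
    using tail_factor_step_down[OF s_ge l_eq y] prob_nonneg[of "Suc k"] l_pos
    by (intro mult_left_mono) auto
  also have "\<dots> = tail_factor l (l - real (Suc k) + 1) * poisson_prob l (Suc k)"
    using l_pos unfolding y_def by simp
  finally show ?case .
qed

lemma left_tail_le: "(\<Sum>i<lo. poisson_prob l i) \<le> (1 + tail_factor l (s + 1)) * poisson_prob l k0"
proof -
  have "(\<Sum>i<lo. poisson_prob l i) \<le> (tail_factor l (k0_gap + 1) + 1) * poisson_prob l k0"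
    using left_tail_partial_le[of k0] by (simp add: lo_eq k0_gap_def algebra_simps)
  also have "\<dots> \<le> (tail_factor l (s + 1) + 1) * poisson_prob l k0"
    using k0_gap_bounds s_ge prob_nonneg
    by (intro mult_right_mono add_right_mono tail_factor_antimono l_pos) auto
  finally show ?thesis
    by (simp add: add.commute)
qed

lemma prob_k0_plus_ge:
  "t \<le> mid - k0 \<Longrightarrow>
     poisson_prob l k0 * (1 + (real t * k0_gap - real t * (real t + 1) / 2) / l) \<le> poisson_prob l (k0 + t)"
proof (induction t)
  case 0
  then show ?case by simp
next
  case (Suc t)
  define C where "C = (real t * k0_gap - real t * (real t + 1) / 2) / l"
  define z where "z = k0_gap - real t - 1"
  have t: "real t + 1 \<le> k0_gap"
    using Suc.prems k0_less_mid mid_bounds unfolding k0_gap_def by linarith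
  have "0 \<le> real t * (k0_gap - (real t + 1) / 2)"
    using t by (intro mult_nonneg_nonneg) auto
  then have C: "0 \<le> C"
    unfolding C_def using l_pos by (simp add: algebra_simps)
  have z: "0 \<le> z" "z < l"
    using t k0_gap_bounds unfolding z_def k0_gap_def by linarith+
  have "(1 + C) * (1 + z / l) = 1 + C + z / l + C * (z / l)"
    by (simp add: algebra_simps add_divide_distrib)
  then have "1 + C + z / l \<le> (1 + C) * (1 + z / l)"
    using mult_nonneg_nonneg[OF C divide_nonneg_pos[OF z(1) l_pos]] by linarith
  then have "poisson_prob l k0 * (1 + C + z / l) \<le> poisson_prob l k0 * ((1 + C) * (1 + z / l))"
    using prob_nonneg by (rule mult_left_mono)
  also have "\<dots> = (poisson_prob l k0 * (1 + C)) * (1 + z / l)"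
    by (simp only: mult.assoc)
  also have "\<dots> \<le> poisson_prob l (k0 + t) * (1 + z / l)"
    using Suc.IH Suc.prems z l_pos unfolding C_def by (intro mult_right_mono) auto
  also have "\<dots> \<le> poisson_prob l (k0 + t) * (l / (l - z))"
  proof -
    have "(1 + z / l) * (l - z) \<le> l"
      using l_pos by (simp add: field_simps)
    then show ?thesis
      using z prob_nonneg by (intro mult_left_mono) (auto simp: le_divide_eq)
  qed
  also have "\<dots> = poisson_prob l (k0 + Suc t)"
    using poisson_prob_Suc[of l "k0 + t"] by (simp add: z_def k0_gap_def)
  also have "1 + C + z / l = 1 + (real (Suc t) * k0_gap - real (Suc t) * (real (Suc t) + 1) / 2) / l"
    unfolding C_def z_def using l_pos by (simp add: field_simps)
  finally show ?case .
qed

definition left_mass :: "nat \<Rightarrow> real" where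
  "left_mass n = (\<Sum>t = 1..n. 1 + (real t * k0_gap - real t * (real t + 1) / 2) / l)"

lemma left_mass_eq:
  "left_mass n = real n + (k0_gap * real n * (real n + 1) / 2 - real n * (real n + 1) * (real n + 2) / 6) / l"
  by (induction n) (simp_all add: left_mass_def, simp add: field_simps l_pos[THEN less_imp_neq, symmetric])

lemma left_centre_ge: "poisson_prob l k0 * left_mass (mid - k0) \<le> (\<Sum>k = lo..mid. poisson_prob l k)"
proof -
  have "poisson_prob l k0 * left_mass (mid - k0) \<le> (\<Sum>t = 1..mid - k0. poisson_prob l (k0 + t))"
    unfolding left_mass_def sum_distrib_left
    by (intro sum_mono prob_k0_plus_ge) auto
  also have "\<dots> = (\<Sum>k = lo..mid. poisson_prob l k)"
    using k0_less_mid lo_eq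
    by (intro sum.reindex_bij_witness[of _ "\<lambda>k. k - k0" "\<lambda>t. k0 + t"]) auto
  finally show ?thesis .
qed

lemma left_mass_ge: "(s - 1) * (1 + (s - 1) / (3 * s)) \<le> left_mass (mid - k0)"
proof -
  define n where "n = real (mid - k0)"
  have n: "k0_gap - 1 < n" "n \<le> k0_gap"
    using k0_less_mid mid_bounds by (simp_all add: n_def k0_gap_def of_nat_diff)
  have "s * (2 * s - 2) \<le> (n + 1) * (3 * k0_gap - n - 2)"
    using n k0_gap_bounds s_ge by (intro mult_mono) auto
  then have "s * (2 * s - 2) / (6 * l) \<le> (n + 1) * (3 * k0_gap - n - 2) / (6 * l)"
    using l_pos by (intro divide_right_mono) auto
  moreover have "s * (2 * s - 2) / (6 * l) = (s - 1) / (3 * s)"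
    using l_eq s_ge by (simp add: field_simps power2_eq_square)
  moreover have "0 \<le> (s - 1) / (3 * s)"
    using s_ge by simp
  ultimately have "(s - 1) * (1 + (s - 1) / (3 * s))
      \<le> n * (1 + (n + 1) * (3 * k0_gap - n - 2) / (6 * l))"
    using n k0_gap_bounds s_ge by (intro mult_mono) auto
  also have "\<dots> = left_mass (mid - k0)"
    using l_pos by (simp add: left_mass_eq n_def field_simps)
  finally show ?thesis .
qed

lemma left_tail_vs_centre: "31/25 * (\<Sum>i<lo. poisson_prob l i) \<le> (\<Sum>k = lo..mid. poisson_prob l k)"
proof -
  have "31/25 * (\<Sum>i<lo. poisson_prob l i) \<le> 31/25 * (1 + tail_factor l (s + 1)) * poisson_prob l k0"
    by (subst mult.assoc) (rule mult_left_mono[OF left_tail_le]; simp)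
  also have "\<dots> \<le> (s - 1) * (1 + (s - 1) / (3 * s)) * poisson_prob l k0"
    using tail_factor_left_estimate[OF s_ge l_eq] prob_nonneg by (intro mult_right_mono) auto
  also have "\<dots> \<le> left_mass (mid - k0) * poisson_prob l k0"
    using left_mass_ge prob_nonneg by (intro mult_right_mono) auto
  also have "\<dots> \<le> (\<Sum>k = lo..mid. poisson_prob l k)"
    using left_centre_ge by (simp add: mult.commute)
  finally show ?thesis .
qed

lemma interval_ge: "31/56 \<le> poisson_interval lo hi l"
proof -
  have "lo \<le> mid"
    using lo_eq k0_less_mid by simp
  have split: "poisson_interval lo hi l
      = (\<Sum>k = lo..mid. poisson_prob l k) + (\<Sum>k = Suc mid..hi. poisson_prob l k)"
  proof -
    have "{lo..hi} = {lo..mid} \<union> {Suc mid..hi}"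
      using \<open>lo \<le> mid\<close> mid_less_hi by auto
    then show ?thesis
      unfolding poisson_interval_def by (simp add: sum.union_disjoint)
  qed
  have "lo \<le> Suc hi"
    using \<open>lo \<le> mid\<close> mid_less_hi by simp
  from poisson_prob_mass_split[OF this, where l = l] split right_tail_vs_centre left_tail_vs_centre
  have "31/25 * (1 - poisson_interval lo hi l) \<le> poisson_interval lo hi l"
    by (simp add: algebra_simps)
  then show ?thesis
    by simp
qed

lemma sd_prob_ge: "3/2 * exp (-1) \<le> poisson_sd_prob l"
proof -
  have "poisson_interval lo hi l \<le> poisson_sd_prob l"
  proof (rule poisson_interval_le_sd_prob[OF l_pos])
    fix k assume "lo \<le> k" "k \<le> hi"
    then have "real lo \<le> real k" "real k \<le> real hi"
      by simp_all
    then show "\<bar>real k - l\<bar> \<le> sqrt l"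
      using lo_bounds hi_bounds unfolding abs_le_iff s_def[symmetric] by (intro conjI; linarith)
  qed
  moreover have "3/2 * exp (-1) \<le> (31/56::real)"
    using e_approx_32 by (simp add: exp_minus field_simps abs_if split: if_split_asm)
  ultimately show ?thesis
    using interval_ge by linarith
qed

end

lemma poisson_sd_prob_ge_large:
  assumes "36 \<le> l"
  shows "3/2 * exp (-1) \<le> poisson_sd_prob l"
proof -
  interpret large_rate l "sqrt l"
    using assms by unfold_locales simp_all
  show ?thesis
    by (rule sd_prob_ge)
qed

lemma poisson_sd_prob_ge:
  assumes "0 < l"
  shows "3/2 * exp (-1) \<le> poisson_sd_prob l"
  using assms poisson_sd_prob_ge_small poisson_sd_prob_ge_moderate poisson_sd_prob_ge_large
  by (cases "l \<le> 1"; cases "l \<le> 36") auto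

lemma poisson_sd_prob_near_one:
  assumes "1 < l" "l < 3/2"
  shows "poisson_sd_prob l = poisson_interval 1 2 l"
proof -
  have sqrt: "1 < sqrt l" "sqrt l < 3/2"
    using assms real_less_lsqrt[of "3/2" l] by (simp_all add: power2_eq_square)
  then have "sqrt l * 1 < sqrt l * sqrt l"
    by (intro mult_strict_left_mono) auto
  then have "sqrt l < l"
    using assms by simp
  with sqrt assms have window: "0 < l - sqrt l" "l - sqrt l < 1" "2 < l + sqrt l" "l + sqrt l < 3"
    by linarith+
  have "\<bar>real k - l\<bar> \<le> sqrt l \<longleftrightarrow> k \<in> {1..2}" for k :: nat
  proof
    assume "\<bar>real k - l\<bar> \<le> sqrt l"
    then have "0 < real k" "real k < 3"
      using window by (simp_all add: abs_le_iff)
    then show "k \<in> {1..2}"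
      by simp
  next
    assume "k \<in> {1..2}"
    then have "1 \<le> real k" "real k \<le> 2"
      by simp_all
    then show "\<bar>real k - l\<bar> \<le> sqrt l"
      using window by (simp add: abs_le_iff)
  qed
  then have "{k. \<bar>real k - l\<bar> \<le> sqrt l} = {1..2}"
    by blast
  then show ?thesis
    by (simp add: poisson_sd_prob_def poisson_interval_def)
qed

lemma poisson_sd_prob_tendsto: "(poisson_sd_prob \<longlongrightarrow> 3/2 * exp (-1)) (at_right 1)"
proof -
  have "isCont (poisson_interval 1 2) 1"
    by (rule DERIV_isCont[OF poisson_interval_has_derivative]) simp
  then have "(poisson_interval 1 2 \<longlongrightarrow> poisson_interval 1 2 1) (at_right 1)"
    by (simp add: isCont_def filterlim_at_split)
  also have "poisson_interval 1 2 1 = 3/2 * exp (-1)"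
    by (simp add: poisson_interval_def poisson_prob_def numeral_2_eq_2)
  finally have "(poisson_interval 1 2 \<longlongrightarrow> 3/2 * exp (-1)) (at_right 1)" .
  moreover have "eventually (\<lambda>l. l \<in> {1<..<3/2}) (at_right (1::real))"
    by (rule eventually_at_right_real) simp
  then have "eventually (\<lambda>l. poisson_interval 1 2 l = poisson_sd_prob l) (at_right 1)"
    by eventually_elim (simp add: poisson_sd_prob_near_one)
  ultimately show ?thesis
    by (rule Lim_transform_eventually)
qed

lemma INF_poisson_sd_prob: "(INF l\<in>{0<..}. poisson_sd_prob l) = 3/2 * exp (-1)"
proof (rule antisym)
  have bdd: "bdd_below (poisson_sd_prob ` {0<..})"
    by (rule bdd_belowI[of _ 0])
      (auto simp: poisson_sd_prob_def less_imp_le intro!: sum_nonneg poisson_prob_nonneg)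
  have "\<forall>\<^sub>F l in at_right 1. (INF l\<in>{0<..}. poisson_sd_prob l) \<le> poisson_sd_prob l"
    using eventually_at_right_less[of "1::real"] by eventually_elim (auto intro: cINF_lower[OF bdd])
  then show "(INF l\<in>{0<..}. poisson_sd_prob l) \<le> 3/2 * exp (-1)"
    by (rule tendsto_lowerbound[OF poisson_sd_prob_tendsto]) simp
next
  show "3/2 * exp (-1) \<le> (INF l\<in>{0<..}. poisson_sd_prob l)"
    by (intro cINF_greatest poisson_sd_prob_ge) auto
qed

theorem theorem4p1:
  shows "(INF l\<in>{0::real<..}.
           measure_pmf.prob (poisson_pmf l)
             {k. \<bar>real k - measure_pmf.expectation (poisson_pmf l) real\<bar>
                   \<le> sqrt (measure_pmf.variance (poisson_pmf l) real)})
         = 3 / 2 * exp (-1)"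
  unfolding INF_poisson_sd_prob[symmetric]
  by (rule INF_cong) (simp_all add: poisson_pmf_prob_within_sd)

end
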